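(* Let $0<c_1<1$ and $c_3\in\mathbb{R}$. For $0\le\alpha\le\sqrt{1-c_1}$ put $$I(\alpha)=\int_{\alpha}^{\sqrt{1-c_1}}\frac{(\rho^2+c_1)^{\frac{2m-1}{2}}}{\{1-(\rho^2+c_1)^m\}^{\frac{2m-1}{2m}}}\,d\rho ,$$ which is finite, and let $d_1=I(0)>0$. Define $\hat\alpha:(c_3-d_1,c_3+d_1)\to(0,\sqrt{1-c_1}]$ by letting $\hat\alpha(u)$ be the unique $\alpha\in(0,\sqrt{1-c_1}]$ with $I(\alpha)=|u-c_3|$ (so $\hat\alpha(c_3)=\sqrt{1-c_1}$). Then $\hat\alpha$ is a $C^2$ function with $\hat\alpha'(c_3)=\hat\alpha''(c_3)=0$; the rotational surface $\hat f(u,v)=(\hat\alpha(u)\cos v,\hat\alpha(u)\sin v,u)$, $u\in(c_3-d_1,c_3+d_1)$, has a Birkhoff–Gauss map extending as a $C^1$ map to the whole domain and has constant Minkowski Gaussian curvature $1$. Moreover $\hat\alpha(u)\to0$ as $u\to c_3\pm d_1$, and $$\lim_{u\to c_3-d_1}\hat\alpha'(u)=\frac{(1-c_1^m)^{\frac{2m-1}{2m}}}{c_1^{\frac{2m-1}{2}}},\qquad \lim_{u\to c_3+d_1}\hat\alpha'(u)=-\frac{(1-c_1^m)^{\frac{2m-1}{2m}}}{c_1^{\frac{2m-1}{2}}},$$ so the surface has singularities at the points $(0,0,c_3\pm d_1)$ on the axis.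
   Context: Fix an integer $m\ge 2$. Let $\Phi(x_1,x_2,x_3)=(x_1^2+x_2^2)^m+x_3^{2m}$ and let $\|\cdot\|$ be the norm on $\mathbb{R}^3$ whose unit sphere is $S=\{x\in\mathbb{R}^3:\Phi(x)=1\}$ (a smooth, strictly convex surface). For a surface given by a parametrization $f(s,v)$, its Birkhoff–Gauss map $\eta$ is the map into $S$ defined by requiring $\eta\in S$ and $\nabla\Phi(\eta)=\mu\, f_s\times f_v$ for some function $\mu>0$, where $\times$ is the standard cross product (so the tangent plane of $S$ at $\eta(p)$ is parallel to $T_pM$, and $d\eta_p$ is an endomorphism of $T_pM$). Where $\eta$ is $C^1$, the Minkowski Gaussian curvature is $K=\det(d\eta_p)$. *)

theory Defs
  imports "HOL-Analysis.Analysis" "HOL-Analysis.Cross3"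
begin

text \<open>The function Phi whose level set Phi = 1 is the unit sphere S of the norm.\<close>
definition Phi :: "nat \<Rightarrow> real^3 \<Rightarrow> real" where
  "Phi m x = ((x$1)^2 + (x$2)^2)^m + (x$3)^(2*m)"

definition integrandI :: "nat \<Rightarrow> real \<Rightarrow> real \<Rightarrow> real" where
  "integrandI m c1 \<rho> =
     (\<rho>^2 + c1) powr ((2 * real m - 1) / 2)
     / (1 - (\<rho>^2 + c1)^m) powr ((2 * real m - 1) / (2 * real m))"

definition Ifun :: "nat \<Rightarrow> real \<Rightarrow> real \<Rightarrow> real" where
  "Ifun m c1 \<alpha> = integral {\<alpha>..sqrt (1 - c1)} (integrandI m c1)"

definition d1 :: "nat \<Rightarrow> real \<Rightarrow> real" where
  "d1 m c1 = Ifun m c1 0"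

definition alpha_hat :: "nat \<Rightarrow> real \<Rightarrow> real \<Rightarrow> real \<Rightarrow> real" where
  "alpha_hat m c1 c3 u =
     (THE \<alpha>. \<alpha> \<in> {0<..sqrt (1 - c1)} \<and> Ifun m c1 \<alpha> = \<bar>u - c3\<bar>)"

definition fhat :: "nat \<Rightarrow> real \<Rightarrow> real \<Rightarrow> real \<times> real \<Rightarrow> real^3" where
  "fhat m c1 c3 p = vector [alpha_hat m c1 c3 (fst p) * cos (snd p),
                            alpha_hat m c1 c3 (fst p) * sin (snd p), fst p]"

text \<open>Birkhoff--Gauss map condition at a point: eta(p) lies in S and grad Phi(eta p)
  is a positive multiple of f_u x f_v (standard cross product).\<close>
definition is_BG_value :: "nat \<Rightarrow> real^3 \<Rightarrow> real^3 \<Rightarrow> real^3 \<Rightarrow> bool" where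
  "is_BG_value m fu fv e \<longleftrightarrow>
     Phi m e = 1 \<and> (\<exists>\<mu>>0. GDERIV (Phi m) e :> (\<mu> *\<^sub>R cross3 fu fv))"

text \<open>Determinant of d eta_p as an endomorphism of T_pM = span(f_u, f_v):
  writing eta_u = a f_u + b f_v and eta_v = c f_u + d f_v, the determinant is ad - bc.\<close>
definition endo_det_is :: "real^3 \<Rightarrow> real^3 \<Rightarrow> real^3 \<Rightarrow> real^3 \<Rightarrow> real \<Rightarrow> bool" where
  "endo_det_is fu fv eu ev K \<longleftrightarrow>
     (\<exists>a b c d. eu = a *\<^sub>R fu + b *\<^sub>R fv \<and> ev = c *\<^sub>R fu + d *\<^sub>R fv \<and> a * d - b * c = K)"

end

theory Submission
  imports Defs
begin

text \<open>
  On either side of \<open>c3\<close> the profile is \<open>alpha_hat u = I\<inverse>(\<bar>u - c3\<bar>)\<close>, so its derivative is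
  \<open>\<plusminus>1 / g(alpha_hat u)\<close> for the integrand \<open>g\<close>. Put \<open>radius x = sqrt (x\<^sup>2 + c1)\<close> and
  \<open>height x = (1 - (x\<^sup>2 + c1)\<^sup>m)\<^bsup>1/(2m)\<^esup>\<close>, so that \<open>radius\<^bsup>2m\<^esup> + height\<^bsup>2m\<^esup> = 1\<close>.
  Then \<open>1/g = (height/radius)\<^bsup>2m-1\<^esup>\<close> is continuous and vanishes at \<open>x = sqrt (1 - c1)\<close>, so the
  first derivative extends by \<open>0\<close> across \<open>c3\<close>; the second derivative is \<open>(1/g) (1/g)'\<close> at
  \<open>alpha_hat u\<close>, an explicit continuous function which also vanishes there because \<open>m \<ge> 2\<close>.
  The integrand is integrable because near \<open>sqrt (1 - c1)\<close> it is bounded by a multiple of \<open>-height'\<close>.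

  The Birkhoff--Gauss map is \<open>\<eta> = (-\<rho> cos v, -\<rho> sin v, z)\<close> with \<open>\<rho> = radius (alpha_hat u)\<close> and
  \<open>z = sgn (c3 - u) height (alpha_hat u)\<close>: it lies on \<open>S\<close>, the gradient of \<open>Phi\<close> there is normal to the
  surface because \<open>z\<^bsup>2m-1\<^esup> = \<rho>\<^bsup>2m-1\<^esup> alpha_hat'\<close>, and \<open>d\<eta>\<close> scales \<open>f\<^sub>u\<close> by \<open>-alpha_hat/\<rho>\<close> and
  \<open>f\<^sub>v\<close> by \<open>-\<rho>/alpha_hat\<close>, so its determinant is \<open>1\<close>.
\<close>

section \<open>Derivatives of real functions\<close>

lemma DERIV_from_punctured_neighbourhood:
  fixes f f' :: "real \<Rightarrow> real"
  assumes "open U" "x \<in> U" and f_cont: "continuous_on U f"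
    and f_deriv: "\<And>y. y \<in> U \<Longrightarrow> y \<noteq> x \<Longrightarrow> (f has_real_derivative f' y) (at y)"
    and f'_cont: "isCont f' x"
  shows "(f has_real_derivative f' x) (at x)"
  unfolding has_field_derivative_iff LIM_eq
proof (intro allI impI)
  fix r :: real assume "r > 0"
  obtain e where e: "e > 0" "ball x e \<subseteq> U" using assms(1,2) open_contains_ball by blast
  obtain d where d: "d > 0" "\<And>y. dist y x < d \<Longrightarrow> dist (f' y) (f' x) < r"
    using f'_cont \<open>r > 0\<close> unfolding continuous_at_eps_delta by blast
  show "\<exists>s>0. \<forall>y. y \<noteq> x \<and> norm (y - x) < s \<longrightarrow> norm ((f y - f x) / (y - x) - f' x) < r"
  proof (intro exI[of _ "min d e"] conjI allI impI)
    fix y assume y: "y \<noteq> x \<and> norm (y - x) < min d e"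
    define a b where "a = min x y" and "b = max x y"
    have "a < b" using y unfolding a_def b_def by auto
    have inner: "t \<in> U \<and> t \<noteq> x" if "a < t" "t < b" for t
    proof -
      have "t \<in> ball x e" using y that unfolding a_def b_def by (auto simp: dist_real_def)
      then show ?thesis using e(2) that unfolding a_def b_def by auto
    qed
    have "continuous_on {a..b} f"
    proof (rule continuous_on_subset[OF f_cont])
      show "{a..b} \<subseteq> U" using y e(2) unfolding a_def b_def by (force simp: dist_real_def)
    qed
    moreover have "f differentiable (at t)" if "a < t" "t < b" for t
      using f_deriv inner[OF that] real_differentiable_def by blast
    ultimately obtain l z where z: "a < z" "z < b" "(f has_real_derivative l) (at z)" "f b - f a = (b - a) * l"
      using MVT[OF \<open>a < b\<close>] by metis
    have "l = f' z" using DERIV_unique[OF z(3) f_deriv] inner[OF z(1,2)] by blast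
    moreover have "(f y - f x) / (y - x) = l"
      using z(4) y unfolding a_def b_def by (cases "x < y") (auto simp: field_simps)
    moreover have "dist z x < d" using z y unfolding a_def b_def dist_real_def by auto
    ultimately show "norm ((f y - f x) / (y - x) - f' x) < r"
      using d(2)[of z] by (simp add: dist_real_def)
  qed (use d e in auto)
qed

lemma DERIV_sgn_mult:
  fixes f :: "real \<Rightarrow> real"
  assumes "x \<noteq> c" "(f has_real_derivative f') (at x)"
  shows "((\<lambda>x. sgn (c - x) * f x) has_real_derivative sgn (c - x) * f') (at x)"
proof -
  have "((\<lambda>y. sgn (c - x) * f y) has_real_derivative sgn (c - x) * f') (at x)"
    using assms(2) by (rule DERIV_cmult)
  then show ?thesis
    by (rule has_field_derivative_transform_within_open[where S = "if x < c then {..<c} else {c<..}"])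
       (use assms(1) in \<open>auto simp: sgn_if split: if_splits\<close>)
qed

lemma isCont_sgn_mult:
  fixes f :: "real \<Rightarrow> real"
  assumes "isCont f c" "f c = 0"
  shows "isCont (\<lambda>x. sgn (c - x) * f x) c"
proof -
  have "((\<lambda>x. \<bar>f x\<bar>) \<longlongrightarrow> 0) (at c)"
    using assms tendsto_rabs_zero by (fastforce simp: isCont_def)
  then have "((\<lambda>x. sgn (c - x) * f x) \<longlongrightarrow> 0) (at c)"
    by (rule Lim_null_comparison[rotated]) (simp add: abs_mult sgn_if)
  then show ?thesis using assms(2) by (simp add: isCont_def)
qed

lemma DERIV_sgn_mult_extension:
  fixes k f' :: "real \<Rightarrow> real"
  assumes "open U" "c \<in> U" "continuous_on U k" "k c = 0"
    and deriv: "\<And>x. x \<in> U \<Longrightarrow> x \<noteq> c \<Longrightarrow> ((\<lambda>x. sgn (c - x) * k x) has_real_derivative f' x) (at x)"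
    and "isCont f' c" "x \<in> U"
  shows "((\<lambda>x. sgn (c - x) * k x) has_real_derivative f' x) (at x)"
proof (cases "x = c")
  case True
  have "isCont (\<lambda>x. sgn (c - x) * k x) y" if "y \<in> U" for y
  proof (cases "y = c")
    case True
    then show ?thesis
      using isCont_sgn_mult assms(1-4) that by (simp add: continuous_on_eq_continuous_at)
  qed (use deriv that DERIV_isCont in blast)
  then show ?thesis
    using DERIV_from_punctured_neighbourhood[OF assms(1,2) _ deriv \<open>isCont f' c\<close>] True
    by (simp add: continuous_at_imp_continuous_on)
qed (use assms in auto)

section \<open>Surfaces of revolution and the Birkhoff--Gauss map\<close>

definition surface_of_revolution :: "(real \<Rightarrow> real) \<Rightarrow> (real \<Rightarrow> real) \<Rightarrow> real \<times> real \<Rightarrow> real^3" where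
  "surface_of_revolution a b p = vector [a (fst p) * cos (snd p), a (fst p) * sin (snd p), b (fst p)]"

definition revolution_tangent_u :: "real \<Rightarrow> real \<Rightarrow> real \<Rightarrow> real^3" where
  "revolution_tangent_u a' b' v = vector [a' * cos v, a' * sin v, b']"

definition revolution_tangent_v :: "real \<Rightarrow> real \<Rightarrow> real^3" where
  "revolution_tangent_v a v = vector [- a * sin v, a * cos v, 0]"

lemma vector_3_eq_scaleR_sum:
  "vector [x, y, z] = x *\<^sub>R vector [1, 0, 0] + y *\<^sub>R vector [0, 1, 0] + z *\<^sub>R (vector [0, 0, 1] :: real^3)"
  by (simp add: vec_eq_iff forall_3)

lemma vector_3_eq_scaleR_sum_fun:
  "(\<lambda>p. vector [x p, y p, z p] :: real^3)
     = (\<lambda>p. x p *\<^sub>R vector [1, 0, 0] + y p *\<^sub>R vector [0, 1, 0] + z p *\<^sub>R vector [0, 0, 1])"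
  by (rule ext) (rule vector_3_eq_scaleR_sum)

lemma has_derivative_vector_3:
  assumes "(x has_derivative x') F" "(y has_derivative y') F" "(z has_derivative z') F"
  shows "((\<lambda>p. vector [x p, y p, z p] :: real^3) has_derivative (\<lambda>h. vector [x' h, y' h, z' h])) F"
  unfolding vector_3_eq_scaleR_sum_fun
  by (intro has_derivative_add has_derivative_scaleR_left assms)

lemma continuous_on_vector_3:
  assumes "continuous_on S x" "continuous_on S y" "continuous_on S z"
  shows "continuous_on S (\<lambda>p. vector [x p, y p, z p] :: real^3)"
  unfolding vector_3_eq_scaleR_sum_fun by (intro continuous_intros assms)

lemma has_derivative_surface_of_revolution:
  assumes a: "(a has_real_derivative a') (at u)" and b: "(b has_real_derivative b') (at u)"
  shows "(surface_of_revolution a b has_derivative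
           (\<lambda>h. fst h *\<^sub>R revolution_tangent_u a' b' v + snd h *\<^sub>R revolution_tangent_v (a u) v)) (at (u, v))"
proof -
  have along_u: "((\<lambda>p. f (fst p)) has_derivative (\<lambda>h. f' * fst h)) (at (u, v))"
    if "(f has_real_derivative f') (at u)" for f f'
    using DERIV_compose_FDERIV[where g = fst and x = "(u, v)" and s = UNIV,
        OF _ has_derivative_fst[OF has_derivative_ident]] that
    by (simp add: mult.commute)
  have along_v: "((\<lambda>p. f (snd p)) has_derivative (\<lambda>h. f' * snd h)) (at (u, v))"
    if "(f has_real_derivative f') (at v)" for f f'
    using DERIV_compose_FDERIV[where g = snd and x = "(u, v)" and s = UNIV,
        OF _ has_derivative_snd[OF has_derivative_ident]] that
    by (simp add: mult.commute)
  have "((\<lambda>p. a (fst p) * cos (snd p)) has_derivative (\<lambda>h. a' * fst h * cos v - a u * sin v * snd h)) (at (u, v))"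
    using has_derivative_mult[OF along_u[OF a] along_v[OF DERIV_cos]] by (simp add: algebra_simps)
  moreover have "((\<lambda>p. a (fst p) * sin (snd p)) has_derivative (\<lambda>h. a' * fst h * sin v + a u * cos v * snd h))
      (at (u, v))"
    using has_derivative_mult[OF along_u[OF a] along_v[OF DERIV_sin]] by (simp add: algebra_simps)
  ultimately have "(surface_of_revolution a b has_derivative (\<lambda>h. vector
      [a' * fst h * cos v - a u * sin v * snd h, a' * fst h * sin v + a u * cos v * snd h, b' * fst h]))
      (at (u, v))"
    unfolding surface_of_revolution_def by (intro has_derivative_vector_3 along_u[OF b])
  then show ?thesis
    unfolding revolution_tangent_u_def revolution_tangent_v_def
    by (rule has_derivative_eq_rhs) (simp add: fun_eq_iff vec_eq_iff forall_3 algebra_simps)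
qed

lemma Blinfun_fst_snd_apply:
  "blinfun_apply (Blinfun (\<lambda>h::real \<times> real. fst h *\<^sub>R V + snd h *\<^sub>R W)) = (\<lambda>h. fst h *\<^sub>R V + snd h *\<^sub>R W)"
  by (intro bounded_linear_Blinfun_apply bounded_linear_add bounded_linear_compose[OF bounded_linear_scaleR_left]
      bounded_linear_fst bounded_linear_snd)

lemma continuous_on_Blinfun_fst_snd:
  fixes V W :: "'a::t2_space \<Rightarrow> 'b::real_normed_vector"
  assumes "continuous_on S V" "continuous_on S W"
  shows "continuous_on S (\<lambda>p. Blinfun (\<lambda>h::real \<times> real. fst h *\<^sub>R V p + snd h *\<^sub>R W p))"
proof (rule continuous_on_blinfun_componentwise)
  fix i :: "real \<times> real" assume "i \<in> Basis"
  then have "i = (1, 0) \<or> i = (0, 1)" by (auto simp: Basis_prod_def)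
  then show "continuous_on S (\<lambda>p. Blinfun (\<lambda>h. fst h *\<^sub>R V p + snd h *\<^sub>R W p) i)"
    using assms by (auto simp: Blinfun_fst_snd_apply)
qed

lemma continuous_on_revolution_tangents:
  fixes a b v :: "'a::t2_space \<Rightarrow> real"
  assumes "continuous_on S a" "continuous_on S b" "continuous_on S v"
  shows "continuous_on S (\<lambda>p. revolution_tangent_u (a p) (b p) (v p))"
    "continuous_on S (\<lambda>p. revolution_tangent_v (a p) (v p))"
  unfolding revolution_tangent_u_def revolution_tangent_v_def
  by (auto intro!: continuous_on_vector_3 continuous_intros assms)

lemma GDERIV_Phi:
  "GDERIV (Phi m) x :> vector [2 * real m * ((x$1)^2 + (x$2)^2)^(m-1) * x$1,
      2 * real m * ((x$1)^2 + (x$2)^2)^(m-1) * x$2, 2 * real m * (x$3)^(2*m-1)]"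
proof -
  have "(Phi m has_derivative (\<lambda>h. real m * ((x$1)^2 + (x$2)^2)^(m-1) * (2 * x$1 * h$1 + 2 * x$2 * h$2)
       + real (2*m) * (x$3)^(2*m-1) * h$3)) (at x)"
    unfolding Phi_def[abs_def]
    by (auto intro!: derivative_eq_intros bounded_linear.has_derivative[OF bounded_linear_vec_nth]
        simp: power2_eq_square algebra_simps)
  then show ?thesis unfolding gderiv_def
    by (rule has_derivative_eq_rhs) (auto simp: inner_vec_def sum_3 algebra_simps fun_eq_iff)
qed

lemma is_BG_value_revolution:
  assumes "1 \<le> m" "0 < a" "0 < \<rho>"
    and on_S: "\<rho>^(2*m) + z^(2*m) = 1"
    and normal: "z^(2*m-1) = \<rho>^(2*m-1) * a'"
  shows "is_BG_value m (revolution_tangent_u a' 1 v) (revolution_tangent_v a v)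
           (vector [- \<rho> * cos v, - \<rho> * sin v, z])"
proof -
  have trig: "(- \<rho> * cos v)^2 + (- \<rho> * sin v)^2 = \<rho>^2"
    using sin_cos_squared_add[of v] by algebra
  have rho_pow: "(\<rho>^2)^(m-1) * \<rho> = \<rho>^(2*m-1)"
    using assms(1) by (cases m) (simp_all add: power_mult[symmetric])
  define \<mu> where "\<mu> = 2 * real m * \<rho>^(2*m-1) / a"
  have cross: "cross3 (revolution_tangent_u a' 1 v) (revolution_tangent_v a v)
      = vector [- a * cos v, - a * sin v, a * a']"
    unfolding cross3_def revolution_tangent_u_def revolution_tangent_v_def
    by (simp add: vec_eq_iff forall_3 algebra_simps)
       (metis distrib_left mult.assoc mult.right_neutral sin_cos_squared_add3)
  have "GDERIV (Phi m) (vector [- \<rho> * cos v, - \<rho> * sin v, z]) :>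
      vector [2 * real m * (\<rho>^2)^(m-1) * (- \<rho> * cos v), 2 * real m * (\<rho>^2)^(m-1) * (- \<rho> * sin v),
        2 * real m * z^(2*m-1)]"
    using GDERIV_Phi[of m "vector [- \<rho> * cos v, - \<rho> * sin v, z]"] by (simp only: vector_3 trig)
  also have "\<dots> = \<mu> *\<^sub>R cross3 (revolution_tangent_u a' 1 v) (revolution_tangent_v a v)"
    unfolding cross normal \<mu>_def rho_pow[symmetric] using assms(2) by (simp add: vec_eq_iff forall_3)
  finally have "GDERIV (Phi m) (vector [- \<rho> * cos v, - \<rho> * sin v, z]) :>
      \<mu> *\<^sub>R cross3 (revolution_tangent_u a' 1 v) (revolution_tangent_v a v)" .
  moreover have "Phi m (vector [- \<rho> * cos v, - \<rho> * sin v, z]) = 1"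
    unfolding Phi_def using trig on_S by (simp add: power_mult)
  moreover have "\<mu> > 0" unfolding \<mu>_def using assms by simp
  ultimately show ?thesis unfolding is_BG_value_def by blast
qed

section \<open>The profile integral and its inverse\<close>

lemma powr_eq_real_root_power:
  fixes x :: real
  assumes "0 < n" "0 < k" "0 \<le> x"
  shows "x powr (real k / real n) = root n x ^ k"
proof (cases "x = 0")
  case False
  then have "root n x ^ k = (x powr (1 / real n)) ^ k" using assms by (simp add: root_powr_inverse)
  also have "\<dots> = x powr (real k / real n)" using False by (simp add: powr_power)
  finally show ?thesis ..
qed (use assms in simp)

locale profile =
  fixes m :: nat and c1 :: real
  assumes two_le_m: "2 \<le> m" and c1_pos: "0 < c1" and c1_less_1: "c1 < 1"
begin

abbreviation s :: real where "s \<equiv> sqrt (1 - c1)"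

text \<open>Over the parallel of radius \<open>x\<close> of the surface, the Birkhoff--Gauss map takes the values
  \<open>(- radius x cos v, - radius x sin v, \<plusminus> height x)\<close>.\<close>

definition radius :: "real \<Rightarrow> real" where
  "radius x = sqrt (x^2 + c1)"

definition height :: "real \<Rightarrow> real" where
  "height x = root (2*m) (1 - (x^2 + c1)^m)"

definition slope :: "real \<Rightarrow> real" where
  "slope x = (height x / radius x)^(2*m-1)"

text \<open>\<open>accel = slope * slope'\<close> (see \<open>DERIV_slope\<close>); composed with the profile it is its second derivative.\<close>

definition accel :: "real \<Rightarrow> real" where
  "accel x = - (2 * real m - 1) * x
     * ((height x / radius x)^(2*m-2) + (height x / radius x)^(4*m-2)) / (radius x)^2"

lemma s_pos: "0 < s"
  using c1_less_1 by simp

lemma sq_add_c1_le_1: assumes "x \<in> {0..s}" shows "x^2 + c1 \<le> 1"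
proof -
  have "x^2 \<le> s^2" using assms by (intro power_mono) auto
  then show ?thesis using c1_less_1 by simp
qed

lemma sq_add_c1_less_1: assumes "x \<in> {0..<s}" shows "x^2 + c1 < 1"
proof -
  have "x^2 < s^2" using assms by (intro power_strict_mono) auto
  then show ?thesis using c1_less_1 by simp
qed

lemma radius_pos: "0 < radius x"
  unfolding radius_def using c1_pos by (simp add: add_nonneg_pos)

lemma radius_squared: "(radius x)^2 = x^2 + c1"
  unfolding radius_def using c1_pos by (simp add: add_nonneg_pos)

lemma radius_le_1: assumes "x \<in> {0..s}" shows "radius x \<le> 1"
  unfolding radius_def using sq_add_c1_le_1[OF assms] by simp

lemma height_pow: assumes "x \<in> {0..s}" shows "(height x)^(2*m) = 1 - (x^2 + c1)^m"
  unfolding height_def using two_le_m sq_add_c1_le_1[OF assms] c1_pos by (simp add: power_le_one)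

lemma radius_height_on_S: assumes "x \<in> {0..s}" shows "(radius x)^(2*m) + (height x)^(2*m) = 1"
proof -
  have "(radius x)^(2*m) = (x^2 + c1)^m" by (simp add: power_mult radius_squared)
  then show ?thesis using height_pow[OF assms] by simp
qed

lemma height_pos: assumes "x \<in> {0..<s}" shows "0 < height x"
  unfolding height_def using two_le_m sq_add_c1_less_1[OF assms] c1_pos
  by (simp add: power_less_one_iff add_nonneg_pos)

lemma height_s: "height s = 0"
  unfolding height_def using c1_less_1 by simp

lemma isCont_radius: "isCont radius x"
  unfolding radius_def by (intro continuous_intros)

lemma isCont_height: "isCont height x"
  unfolding height_def by (intro continuous_intros)

lemma integrand_eq: assumes "x \<in> {0..s}" shows "integrandI m c1 x = (radius x / height x)^(2*m-1)"
proof -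
  have pos: "0 < 2*m-1" "0 < 2*m" using two_le_m by auto
  have "(x^2 + c1) powr ((2 * real m - 1) / 2) = (x^2 + c1) powr (real (2*m-1) / real 2)"
    using two_le_m by (simp add: of_nat_diff)
  also have "\<dots> = (radius x)^(2*m-1)"
    unfolding radius_def sqrt_def using c1_pos by (intro powr_eq_real_root_power pos) auto
  finally have num: "(x^2 + c1) powr ((2 * real m - 1) / 2) = (radius x)^(2*m-1)" .
  have "(1 - (x^2 + c1)^m) powr ((2 * real m - 1) / (2 * real m))
      = (1 - (x^2 + c1)^m) powr (real (2*m-1) / real (2*m))"
    using two_le_m by (simp add: of_nat_diff)
  also have "\<dots> = (height x)^(2*m-1)"
    unfolding height_def using sq_add_c1_le_1[OF assms] c1_pos
    by (intro powr_eq_real_root_power pos) (simp add: power_le_one)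
  finally have den: "(1 - (x^2 + c1)^m) powr ((2 * real m - 1) / (2 * real m)) = (height x)^(2*m-1)" .
  show ?thesis unfolding integrandI_def num den power_divide ..
qed

lemma slope_eq_inverse_integrand: assumes "x \<in> {0..s}" shows "slope x = inverse (integrandI m c1 x)"
  unfolding slope_def integrand_eq[OF assms] by (simp add: power_inverse[symmetric] inverse_divide)

lemma slope_0:
  "slope 0 = (1 - c1 ^ m) powr ((2 * real m - 1) / (2 * real m)) / c1 powr ((2 * real m - 1) / 2)"
  using slope_eq_inverse_integrand[of 0] s_pos by (simp add: integrandI_def)

lemma slope_pos: assumes "x \<in> {0..<s}" shows "0 < slope x"
  unfolding slope_def using height_pos[OF assms] radius_pos by simp

lemma slope_s: "slope s = 0"
  unfolding slope_def height_s using two_le_m by simp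

lemma accel_s: "accel s = 0"
  unfolding accel_def height_s using two_le_m by (simp add: power_0_left)

lemma isCont_slope: "isCont slope x"
  unfolding slope_def[abs_def] using radius_pos[of x] isCont_radius isCont_height
  by (intro continuous_intros) auto

lemma isCont_accel: "isCont accel x"
  unfolding accel_def[abs_def] using radius_pos[of x] isCont_radius isCont_height
  by (intro continuous_intros) auto

lemma DERIV_radius: "(radius has_real_derivative x / radius x) (at x)"
proof -
  have "((\<lambda>x. x^2 + c1) has_real_derivative 2 * x) (at x)"
    by (auto intro!: derivative_eq_intros)
  from DERIV_chain2[OF DERIV_real_sqrt this] c1_pos
  have "(radius has_real_derivative inverse (radius x) / 2 * (2 * x)) (at x)"
    by (simp only: radius_def[symmetric]) (simp add: add_nonneg_pos)
  moreover have "inverse (radius x) / 2 * (2 * x) = x / radius x"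
    by (simp add: field_simps)
  ultimately show ?thesis by simp
qed

lemma radius_pow_odd: "(radius x)^(2*m-1) = radius x * (x^2 + c1)^(m-1)"
  using two_le_m by (cases m) (simp_all add: power_mult radius_squared)

lemma DERIV_height: assumes "x \<in> {0<..<s}"
  shows "(height has_real_derivative - x / (radius x * slope x)) (at x)"
proof -
  have base: "0 < 1 - (x^2 + c1)^m" using sq_add_c1_less_1[of x] assms c1_pos two_le_m
    by (simp add: power_less_one_iff add_nonneg_pos)
  have "((\<lambda>x. 1 - (x^2 + c1)^m) has_real_derivative - (real m * (x^2 + c1)^(m-1) * (2 * x))) (at x)"
    by (auto intro!: derivative_eq_intros simp: power2_eq_square)
  from DERIV_chain2[OF DERIV_real_root[of "2*m", OF _ base] this] two_le_m
  have "(height has_real_derivative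
      inverse (real (2*m) * (height x)^(2*m - Suc 0)) * - (real m * (x^2 + c1)^(m-1) * (2 * x))) (at x)"
    by (simp only: height_def[symmetric])
  moreover have "inverse (real (2*m) * (height x)^(2*m - Suc 0)) * - (real m * (x^2 + c1)^(m-1) * (2 * x))
      = - x / (radius x * slope x)"
  proof -
    have "slope x = (height x)^(2*m-1) / (radius x * (x^2 + c1)^(m-1))"
      unfolding slope_def power_divide radius_pow_odd ..
    moreover have "0 < height x" "0 < radius x" "0 < m" "0 < (x^2 + c1)^(m-1)"
      using height_pos[of x] assms radius_pos[of x] two_le_m c1_pos by (auto simp: add_nonneg_pos)
    ultimately show ?thesis by (simp add: field_simps)
  qed
  ultimately show ?thesis by simp
qed

lemma DERIV_slope: assumes "x \<in> {0<..<s}"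
  shows "(slope has_real_derivative accel x / slope x) (at x)"
proof -
  define n where "n = 2*m-1"
  define t where "t = height x / radius x"
  have t_pos: "0 < t" unfolding t_def using height_pos[of x] assms radius_pos[of x] by simp
  have r: "0 < radius x" by (rule radius_pos)
  have "((\<lambda>x. (height x / radius x)^n) has_real_derivative real n
      * ((((- x / (radius x * slope x)) * radius x - height x * (x / radius x)) / (radius x * radius x)) * t^(n - Suc 0))) (at x)"
    unfolding t_def
    by (rule DERIV_power[OF DERIV_divide[OF DERIV_height[OF assms] DERIV_radius]]) (use r in simp)
  then have "(slope has_real_derivative real n
      * ((((- x / (radius x * t^n)) * radius x - height x * (x / radius x)) / (radius x * radius x)) * t^(n - Suc 0))) (at x)"
    unfolding n_def t_def by (simp only: slope_def[abs_def, symmetric]) (simp add: slope_def)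
  moreover have "real n
      * ((((- x / (radius x * t^n)) * radius x - height x * (x / radius x)) / (radius x * radius x)) * t^(n - Suc 0))
      = accel x / slope x"
  proof -
    have exps: "2*m-2 = n - Suc 0" "4*m-2 = n + n" "n = Suc (n - Suc 0)" "2 * real m - 1 = real n"
      unfolding n_def using two_le_m by (auto simp: of_nat_diff)
    have h: "height x = t * radius x" unfolding t_def using r by simp
    obtain k where k: "n = Suc k" using exps(3) by blast
    show ?thesis
      unfolding accel_def slope_def t_def[symmetric] n_def[symmetric] exps(1,2,4) h k
      using t_pos r by (simp add: field_simps power_add power2_eq_square)
  qed
  ultimately show ?thesis by simp
qed

lemma integrand_pos: assumes "x \<in> {0..<s}" shows "0 < integrandI m c1 x"
  using integrand_eq[of x] height_pos[OF assms] radius_pos[of x] assms by simp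

lemma continuous_on_integrand: "continuous_on {0..<s} (integrandI m c1)"
proof -
  have "continuous_on {0..<s} (\<lambda>x. (radius x / height x)^(2*m-1))"
    using height_pos isCont_radius isCont_height
    by (intro continuous_at_imp_continuous_on ballI continuous_intros) (auto simp: less_imp_neq[symmetric])
  then show ?thesis by (rule continuous_on_cong[THEN iffD1, rotated 2]) (auto simp: integrand_eq)
qed

text \<open>The bound \<open>x / (radius x * slope x)\<close> is \<open>- height' x\<close> (see \<open>DERIV_height\<close>).\<close>

lemma integrand_le_scaled_height_deriv:
  assumes "x \<in> {s/2..<s}" shows "integrandI m c1 x \<le> 2 / s * (x / (radius x * slope x))"
proof -
  have x: "x \<in> {0..<s}" using assms s_pos by auto
  have "x \<le> x / radius x"
    using radius_le_1[of x] radius_pos[of x] x by (simp add: le_divide_eq mult_left_le)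
  moreover have "s / 2 \<le> x" using assms by simp
  ultimately have "s / 2 \<le> x / radius x" by linarith
  then have "2 / s * (s / 2) \<le> 2 / s * (x / radius x)" using s_pos by (intro mult_left_mono) auto
  then have "1 \<le> 2 / s * (x / radius x)" using s_pos by simp
  from mult_right_mono[OF this, of "1 / slope x"]
  have "1 / slope x \<le> 2 / s * (x / radius x) * (1 / slope x)" using slope_pos[OF x] by simp
  also have "\<dots> = 2 / s * (x / (radius x * slope x))" by simp
  finally show ?thesis
    using slope_eq_inverse_integrand[of x] x by (simp add: inverse_eq_divide)
qed

lemma integrable_integrand_near_s: "integrandI m c1 integrable_on {s/2..s}"
proof -
  have Icc_eq: "{s/2..s} = insert s {s/2..<s}" using s_pos by auto
  have "((\<lambda>x. - height x) has_vector_derivative x / (radius x * slope x)) (at x)"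
    if "x \<in> {s/2<..<s}" for x
    using DERIV_minus[OF DERIV_height[of x]] that s_pos
    by (simp add: has_real_derivative_iff_has_vector_derivative[symmetric])
  then have deriv_int: "(\<lambda>x. x / (radius x * slope x)) integrable_on {s/2..s}"
    using fundamental_theorem_of_calculus_interior[of "s/2" s "\<lambda>x. - height x"] s_pos isCont_height
    by (force intro!: continuous_at_imp_continuous_on continuous_intros)
  have bound_int: "(\<lambda>x. 2 / s * (x / (radius x * slope x))) integrable_on {s/2..<s}"
    using integrable_on_cmult_left[OF deriv_int[unfolded Icc_eq integrable_on_insert_iff], of "2 / s"] by simp
  have "integrandI m c1 \<in> borel_measurable (lebesgue_on {s/2..<s})"
    by (rule continuous_imp_measurable_on_sets_lebesgue continuous_on_subset[OF continuous_on_integrand])+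
       (use s_pos in auto)
  then have "integrandI m c1 integrable_on {s/2..<s}"
    by (rule measurable_bounded_by_integrable_imp_integrable_real[OF _ bound_int])
       (use integrand_pos integrand_le_scaled_height_deriv s_pos in \<open>auto simp: less_imp_le\<close>)
  then show ?thesis
    unfolding Icc_eq integrable_on_insert_iff .
qed

lemma integrable_integrand: "integrandI m c1 integrable_on {0..s}"
proof (rule Henstock_Kurzweil_Integration.integrable_combine[OF _ _ _ integrable_integrand_near_s])
  show "integrandI m c1 integrable_on {0..s/2}"
    by (rule integrable_continuous_interval continuous_on_subset[OF continuous_on_integrand])+
       (use s_pos in \<open>auto simp del: real_sqrt_gt_0_iff\<close>)
qed (use s_pos in auto)

lemma integrable_integrand_subinterval: assumes "x \<in> {0..s}" shows "integrandI m c1 integrable_on {x..s}"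
  by (rule integrable_subinterval_real[OF integrable_integrand]) (use assms in auto)

lemma Ifun_s: "Ifun m c1 s = 0"
  unfolding Ifun_def by simp

lemma continuous_on_Ifun: "continuous_on {0..s} (Ifun m c1)"
  unfolding Ifun_def[abs_def] by (rule indefinite_integral_continuous_1'[OF integrable_integrand])

lemma DERIV_Ifun: assumes "x \<in> {0<..<s}"
  shows "(Ifun m c1 has_real_derivative - integrandI m c1 x) (at x)"
proof -
  define b where "b = (x + s) / 2"
  have b: "x < b" "b < s" using assms unfolding b_def by auto
  have "((\<lambda>y. integral {y..b} (integrandI m c1)) has_real_derivative - integrandI m c1 x) (at x within {0..b})"
    by (rule integral_has_real_derivative' continuous_on_subset[OF continuous_on_integrand])+
       (use assms b in auto)
  then have "((\<lambda>y. integral {y..b} (integrandI m c1) + integral {b..s} (integrandI m c1))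
      has_real_derivative - integrandI m c1 x) (at x)"
    using at_within_Icc_at[of 0 x b] assms b by (auto intro!: derivative_eq_intros)
  then show ?thesis
  proof (rule has_field_derivative_transform_within_open[where S = "{0<..<b}"])
    fix y assume "y \<in> {0<..<b}"
    then show "integral {y..b} (integrandI m c1) + integral {b..s} (integrandI m c1) = Ifun m c1 y"
      unfolding Ifun_def using b
      by (intro Henstock_Kurzweil_Integration.integral_combine integrable_integrand_subinterval) auto
  qed (use assms b in auto)
qed

lemma Ifun_strict_decreasing: assumes "0 \<le> x" "x < y" "y \<le> s" shows "Ifun m c1 y < Ifun m c1 x"
proof (rule DERIV_neg_imp_decreasing_open[OF assms(2)])
  show "continuous_on {x..y} (Ifun m c1)"
    by (rule continuous_on_subset[OF continuous_on_Ifun]) (use assms in auto)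
next
  fix t assume "x < t" "t < y"
  then have t: "t \<in> {0<..<s}" using assms by auto
  show "\<exists>d. (Ifun m c1 has_real_derivative d) (at t) \<and> d < 0"
    using DERIV_Ifun[OF t] integrand_pos[of t] t by (intro exI[of _ "- integrandI m c1 t"]) auto
qed

lemma d1_pos: "0 < d1 m c1"
  using Ifun_strict_decreasing[of 0 s] s_pos Ifun_s unfolding d1_def by simp

lemma inj_on_Ifun: "inj_on (Ifun m c1) {0..s}"
proof (rule inj_onI)
  fix x y assume "x \<in> {0..s}" "y \<in> {0..s}" "Ifun m c1 x = Ifun m c1 y"
  then show "x = y"
    using Ifun_strict_decreasing[of x y] Ifun_strict_decreasing[of y x]
    by (cases x y rule: linorder_cases) auto
qed

lemma Ifun_image: "Ifun m c1 ` {0..s} = {0..d1 m c1}"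
proof
  have "Ifun m c1 x \<in> {0..d1 m c1}" if x: "x \<in> {0..s}" for x
  proof -
    have "Ifun m c1 s \<le> Ifun m c1 x"
      using Ifun_strict_decreasing[of x s] x by (cases "x = s") auto
    moreover have "Ifun m c1 x \<le> Ifun m c1 0"
      using Ifun_strict_decreasing[of 0 x] x by (cases "x = 0") auto
    ultimately show ?thesis unfolding d1_def Ifun_s by simp
  qed
  then show "Ifun m c1 ` {0..s} \<subseteq> {0..d1 m c1}" by blast
  show "{0..d1 m c1} \<subseteq> Ifun m c1 ` {0..s}"
  proof
    fix y assume "y \<in> {0..d1 m c1}"
    then obtain x where "0 \<le> x \<and> x \<le> s \<and> Ifun m c1 x = y"
      using IVT2'[of "Ifun m c1" s y 0] continuous_on_Ifun Ifun_s s_pos unfolding d1_def by auto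
    then show "y \<in> Ifun m c1 ` {0..s}" by auto
  qed
qed

definition Iinv :: "real \<Rightarrow> real" where
  "Iinv = the_inv_into {0..s} (Ifun m c1)"

lemma Iinv_Ifun: assumes "x \<in> {0..s}" shows "Iinv (Ifun m c1 x) = x"
  unfolding Iinv_def by (rule the_inv_into_f_f[OF inj_on_Ifun assms])

lemma Ifun_Iinv: assumes "y \<in> {0..d1 m c1}" shows "Ifun m c1 (Iinv y) = y"
  unfolding Iinv_def by (rule f_the_inv_into_f[OF inj_on_Ifun]) (use assms Ifun_image in auto)

lemma Iinv_in: assumes "y \<in> {0..d1 m c1}" shows "Iinv y \<in> {0..s}"
  unfolding Iinv_def by (rule the_inv_into_into[OF inj_on_Ifun]) (use assms Ifun_image in auto)

lemma Iinv_0: "Iinv 0 = s"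
  using Iinv_Ifun[of s] Ifun_s s_pos by simp

lemma Iinv_d1: "Iinv (d1 m c1) = 0"
  using Iinv_Ifun[of 0] s_pos unfolding d1_def by simp

lemma Iinv_pos: assumes "y \<in> {0..<d1 m c1}" shows "Iinv y \<in> {0<..s}"
proof -
  have "Iinv y \<noteq> 0"
  proof
    assume "Iinv y = 0"
    then have "y = d1 m c1" using Ifun_Iinv[of y] assms unfolding d1_def by auto
    with assms show False by simp
  qed
  then show ?thesis using Iinv_in[of y] assms by auto
qed

lemma Iinv_interior: assumes "y \<in> {0<..<d1 m c1}" shows "Iinv y \<in> {0<..<s}"
proof -
  have "Iinv y \<noteq> s" using Ifun_Iinv[of y] assms Ifun_s by auto
  then show ?thesis using Iinv_pos[of y] assms by auto
qed

lemma continuous_on_Iinv: "continuous_on {0..d1 m c1} Iinv"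
  using continuous_on_inv[OF continuous_on_Ifun compact_Icc, of Iinv] Iinv_Ifun
  unfolding Ifun_image by blast

lemma DERIV_Iinv: assumes "y \<in> {0<..<d1 m c1}"
  shows "(Iinv has_real_derivative - slope (Iinv y)) (at y)"
proof -
  have x: "Iinv y \<in> {0<..<s}" by (rule Iinv_interior[OF assms])
  have "(Iinv has_real_derivative inverse (- integrandI m c1 (Iinv y))) (at y)"
  proof (rule DERIV_inverse_function[where a = 0 and b = "d1 m c1"])
    show "(Ifun m c1 has_real_derivative - integrandI m c1 (Iinv y)) (at (Iinv y))"
      by (rule DERIV_Ifun[OF x])
    show "- integrandI m c1 (Iinv y) \<noteq> 0" using integrand_pos[of "Iinv y"] x by auto
    show "isCont Iinv y"
      using continuous_on_interior[OF continuous_on_Iinv, of y] assms by auto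
  qed (use assms Ifun_Iinv in auto)
  then show ?thesis
    using slope_eq_inverse_integrand[of "Iinv y"] x by (simp add: inverse_minus_eq)
qed

end

section \<open>The rotational surface\<close>

locale rotational_surface = profile +
  fixes c3 :: real
begin

abbreviation U :: "real set" where
  "U \<equiv> {c3 - d1 m c1<..<c3 + d1 m c1}"

text \<open>A total version of \<open>alpha_hat\<close>, which is a definite description and meaningful only on \<open>U\<close>.\<close>

definition alpha :: "real \<Rightarrow> real" where
  "alpha u = Iinv \<bar>u - c3\<bar>"

definition alpha' :: "real \<Rightarrow> real" where
  "alpha' u = sgn (c3 - u) * slope (alpha u)"

definition alpha'' :: "real \<Rightarrow> real" where
  "alpha'' u = accel (alpha u)"

lemma c3_in_U: "c3 \<in> U"
  using d1_pos by simp

lemma alpha_c3: "alpha c3 = s"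
  unfolding alpha_def by (simp add: Iinv_0)

lemma alpha_in: assumes "u \<in> U" shows "alpha u \<in> {0<..s}"
  unfolding alpha_def using assms by (intro Iinv_pos) auto

lemma alpha_interior: assumes "u \<in> U" "u \<noteq> c3" shows "alpha u \<in> {0<..<s}"
  unfolding alpha_def using assms by (intro Iinv_interior) auto

lemma continuous_on_alpha_Icc: "continuous_on {c3 - d1 m c1..c3 + d1 m c1} alpha"
  unfolding alpha_def[abs_def]
  by (rule continuous_on_compose2[OF continuous_on_Iinv]) (auto intro!: continuous_intros)

lemma alpha_hat_eq_alpha: assumes "u \<in> U"
  shows "\<exists>!a. a \<in> {0<..s} \<and> Ifun m c1 a = \<bar>u - c3\<bar>" "alpha_hat m c1 c3 u = alpha u"
proof -
  have y: "\<bar>u - c3\<bar> \<in> {0..d1 m c1}" using assms by auto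
  have a: "alpha u \<in> {0<..s}" "Ifun m c1 (alpha u) = \<bar>u - c3\<bar>"
    using alpha_in[OF assms] Ifun_Iinv[OF y] unfolding alpha_def by auto
  have unique: "b = alpha u" if "b \<in> {0<..s} \<and> Ifun m c1 b = \<bar>u - c3\<bar>" for b
    using inj_onD[OF inj_on_Ifun, of b "alpha u"] a that by auto
  show "\<exists>!a. a \<in> {0<..s} \<and> Ifun m c1 a = \<bar>u - c3\<bar>" using a unique by blast
  show "alpha_hat m c1 c3 u = alpha u"
    unfolding alpha_hat_def using a unique by (intro the_equality) auto
qed

lemma isCont_alpha: assumes "u \<in> U" shows "isCont alpha u"
  using continuous_on_interior[OF continuous_on_alpha_Icc, of u] assms by auto

lemma continuous_on_alpha_U: "continuous_on U alpha"
  by (intro continuous_at_imp_continuous_on ballI isCont_alpha)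

lemma DERIV_alpha_off_c3: assumes "u \<in> U" "u \<noteq> c3"
  shows "(alpha has_real_derivative alpha' u) (at u)"
proof -
  have abs_eq: "(\<lambda>u. sgn (c3 - u) * (c3 - u)) = (\<lambda>u. \<bar>u - c3\<bar>)"
    by (auto simp: sgn_if)
  have "((\<lambda>u. \<bar>u - c3\<bar>) has_real_derivative sgn (c3 - u) * - 1) (at u)"
    unfolding abs_eq[symmetric] by (rule DERIV_sgn_mult) (auto intro!: derivative_eq_intros assms(2))
  from DERIV_chain2[OF DERIV_Iinv this] assms
  show ?thesis unfolding alpha_def[abs_def] alpha'_def by (auto simp: mult.commute)
qed

lemma isCont_alpha'_c3: "isCont alpha' c3"
  unfolding alpha'_def[abs_def]
  by (rule isCont_sgn_mult) (use isCont_o2[OF isCont_alpha[OF c3_in_U] isCont_slope] alpha_c3 slope_s in auto)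

lemma DERIV_alpha: assumes "u \<in> U" shows "(alpha has_real_derivative alpha' u) (at u)"
proof (cases "u = c3")
  case True
  show ?thesis unfolding True
    by (rule DERIV_from_punctured_neighbourhood[OF _ c3_in_U continuous_on_alpha_U DERIV_alpha_off_c3 isCont_alpha'_c3])
       auto
qed (use assms DERIV_alpha_off_c3 in auto)

lemma DERIV_alpha': assumes "u \<in> U" shows "(alpha' has_real_derivative alpha'' u) (at u)"
  unfolding alpha'_def[abs_def]
proof (rule DERIV_sgn_mult_extension[OF _ c3_in_U _ _ _ _ assms])
  show "continuous_on U (\<lambda>u. slope (alpha u))"
    using isCont_o2[OF isCont_alpha isCont_slope] by (intro continuous_at_imp_continuous_on) auto
  show "isCont alpha'' c3"
    unfolding alpha''_def[abs_def] by (rule isCont_o2[OF isCont_alpha[OF c3_in_U] isCont_accel])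
  fix u assume u: "u \<in> U" "u \<noteq> c3"
  have d: "((\<lambda>u. slope (alpha u)) has_real_derivative accel (alpha u) / slope (alpha u) * alpha' u) (at u)"
    by (rule DERIV_chain2[OF DERIV_slope DERIV_alpha_off_c3]) (use alpha_interior u in auto)
  have v: "sgn (c3 - u) * (accel (alpha u) / slope (alpha u) * alpha' u) = alpha'' u"
    using slope_pos[of "alpha u"] alpha_interior[OF u] u(2)
    by (cases "u < c3") (simp_all add: alpha'_def alpha''_def)
  show "((\<lambda>u. sgn (c3 - u) * slope (alpha u)) has_real_derivative alpha'' u) (at u)"
    using DERIV_sgn_mult[OF u(2) d] unfolding v .
qed (use alpha_c3 slope_s in auto)

lemma continuous_on_alpha'': "continuous_on U alpha''"
  unfolding alpha''_def[abs_def]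
  by (intro continuous_at_imp_continuous_on ballI isCont_o2[OF isCont_alpha isCont_accel])

lemma alpha'_c3: "alpha' c3 = 0"
  unfolding alpha'_def by simp

lemma alpha''_c3: "alpha'' c3 = 0"
  unfolding alpha''_def alpha_c3 by (rule accel_s)

lemma eventually_left_of_c3: "eventually (\<lambda>u. u \<in> U \<and> u < c3) (at_right (c3 - d1 m c1))"
  unfolding eventually_at_right_field using d1_pos by (intro exI[of _ c3]) auto

lemma eventually_right_of_c3: "eventually (\<lambda>u. u \<in> U \<and> c3 < u) (at_left (c3 + d1 m c1))"
  unfolding eventually_at_left_field using d1_pos by (intro exI[of _ c3]) auto

lemma alpha_tendsto_left_end: "(alpha \<longlongrightarrow> 0) (at_right (c3 - d1 m c1))"
  using continuous_on_Icc_at_rightD[OF continuous_on_alpha_Icc] d1_pos Iinv_d1 by (simp add: alpha_def)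

lemma alpha_tendsto_right_end: "(alpha \<longlongrightarrow> 0) (at_left (c3 + d1 m c1))"
  using continuous_on_Icc_at_leftD[OF continuous_on_alpha_Icc] d1_pos Iinv_d1 by (simp add: alpha_def)

lemma alpha'_tendsto_left_end: "(alpha' \<longlongrightarrow> slope 0) (at_right (c3 - d1 m c1))"
proof (rule Lim_transform_eventually[OF isCont_tendsto_compose[OF isCont_slope alpha_tendsto_left_end]])
  show "\<forall>\<^sub>F u in at_right (c3 - d1 m c1). slope (alpha u) = alpha' u"
    using eventually_left_of_c3 by eventually_elim (simp add: alpha'_def)
qed

lemma alpha'_tendsto_right_end: "(alpha' \<longlongrightarrow> - slope 0) (at_left (c3 + d1 m c1))"
proof (rule Lim_transform_eventually[OF tendsto_minus[OF isCont_tendsto_compose[OF isCont_slope alpha_tendsto_right_end]]])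
  show "\<forall>\<^sub>F u in at_left (c3 + d1 m c1). - slope (alpha u) = alpha' u"
    using eventually_right_of_c3 by eventually_elim (simp add: alpha'_def)
qed

definition gauss_z :: "real \<Rightarrow> real" where
  "gauss_z u = sgn (c3 - u) * height (alpha u)"

lemma DERIV_gauss_z: assumes "u \<in> U"
  shows "(gauss_z has_real_derivative - alpha u / radius (alpha u)) (at u)"
  unfolding gauss_z_def[abs_def]
proof (rule DERIV_sgn_mult_extension[OF _ c3_in_U _ _ _ _ assms])
  show "continuous_on U (\<lambda>u. height (alpha u))"
    using isCont_o2[OF isCont_alpha isCont_height] by (intro continuous_at_imp_continuous_on) auto
  show "isCont (\<lambda>u. - alpha u / radius (alpha u)) c3"
    using isCont_alpha[OF c3_in_U] isCont_o2[OF isCont_alpha[OF c3_in_U] isCont_radius] radius_pos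
    by (intro continuous_intros) (auto simp: less_imp_neq[symmetric])
  fix u assume u: "u \<in> U" "u \<noteq> c3"
  have d: "((\<lambda>u. height (alpha u)) has_real_derivative
      - alpha u / (radius (alpha u) * slope (alpha u)) * alpha' u) (at u)"
    by (rule DERIV_chain2[OF DERIV_height DERIV_alpha_off_c3]) (use alpha_interior u in auto)
  have v: "sgn (c3 - u) * (- alpha u / (radius (alpha u) * slope (alpha u)) * alpha' u)
      = - alpha u / radius (alpha u)"
    using slope_pos[of "alpha u"] alpha_interior[OF u] u(2)
    by (cases "u < c3") (simp_all add: alpha'_def)
  show "((\<lambda>u. sgn (c3 - u) * height (alpha u)) has_real_derivative - alpha u / radius (alpha u)) (at u)"
    using DERIV_sgn_mult[OF u(2) d] unfolding v .
qed (use alpha_c3 height_s in auto)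

lemma gauss_z_on_S: assumes "u \<in> U"
  shows "(radius (alpha u))^(2*m) + (gauss_z u)^(2*m) = 1"
proof -
  have "(gauss_z u)^(2*m) = (height (alpha u))^(2*m)"
    using alpha_c3 height_s two_le_m
    by (cases u c3 rule: linorder_cases) (simp_all add: gauss_z_def power_mult_distrib)
  then show ?thesis using radius_height_on_S alpha_in[OF assms] by auto
qed

lemma gauss_z_odd_power: "(gauss_z u)^(2*m-1) = (radius (alpha u))^(2*m-1) * alpha' u"
proof -
  have "sgn (c3 - u) ^ (2*m-1) = sgn (c3 - u)"
    using two_le_m by (cases u c3 rule: linorder_cases) (simp_all add: sgn_if)
  then show ?thesis
    using radius_pos[of "alpha u"]
    by (simp add: gauss_z_def alpha'_def slope_def power_mult_distrib power_divide)
qed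

definition gauss_map :: "real \<times> real \<Rightarrow> real^3" where
  "gauss_map = surface_of_revolution (\<lambda>u. - radius (alpha u)) gauss_z"

definition gauss_map_deriv :: "real \<times> real \<Rightarrow> (real \<times> real) \<Rightarrow>\<^sub>L (real^3)" where
  "gauss_map_deriv p = Blinfun (\<lambda>h.
      fst h *\<^sub>R revolution_tangent_u (- (alpha (fst p) / radius (alpha (fst p)) * alpha' (fst p)))
                   (- alpha (fst p) / radius (alpha (fst p))) (snd p)
    + snd h *\<^sub>R revolution_tangent_v (- radius (alpha (fst p))) (snd p))"

lemma has_derivative_gauss_map: assumes "u \<in> U"
  shows "(gauss_map has_derivative blinfun_apply (gauss_map_deriv (u, v))) (at (u, v))"
proof -
  have "((\<lambda>u. - radius (alpha u)) has_real_derivative - (alpha u / radius (alpha u) * alpha' u)) (at u)"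
    by (rule DERIV_minus[OF DERIV_chain2[OF DERIV_radius DERIV_alpha[OF assms]]])
  from has_derivative_surface_of_revolution[OF this DERIV_gauss_z[OF assms]]
  show ?thesis unfolding gauss_map_def gauss_map_deriv_def Blinfun_fst_snd_apply by simp
qed

lemma continuous_on_gauss_map_deriv: "continuous_on (U \<times> UNIV) gauss_map_deriv"
proof -
  have fst: "continuous_on (U \<times> UNIV) (\<lambda>p. f (fst p))" if "continuous_on U f" for f :: "real \<Rightarrow> real"
    by (rule continuous_on_compose2[OF that continuous_on_fst[OF continuous_on_id]]) auto
  have "continuous_on U (\<lambda>u. radius (alpha u))"
    using isCont_o2[OF isCont_alpha isCont_radius] by (intro continuous_at_imp_continuous_on) auto
  moreover have "continuous_on U alpha'"
    using DERIV_alpha' DERIV_isCont by (intro continuous_at_imp_continuous_on) blast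
  ultimately show ?thesis
    unfolding gauss_map_deriv_def using radius_pos continuous_on_alpha_U
    by (intro continuous_on_Blinfun_fst_snd continuous_on_revolution_tangents continuous_intros fst)
       (auto simp: less_imp_neq[symmetric])
qed

lemma fhat_eq: "fhat m c1 c3 = surface_of_revolution (alpha_hat m c1 c3) (\<lambda>u. u)"
  by (simp add: fun_eq_iff fhat_def surface_of_revolution_def)

lemma DERIV_alpha_hat: assumes "u \<in> U" shows "(alpha_hat m c1 c3 has_real_derivative alpha' u) (at u)"
  by (rule has_field_derivative_transform_within_open[OF DERIV_alpha[OF assms], where S = U])
     (use assms alpha_hat_eq_alpha in auto)

lemma alpha_hat_tendsto_ends:
  "(alpha_hat m c1 c3 \<longlongrightarrow> 0) (at_right (c3 - d1 m c1))"
  "(alpha_hat m c1 c3 \<longlongrightarrow> 0) (at_left (c3 + d1 m c1))"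
proof -
  show "(alpha_hat m c1 c3 \<longlongrightarrow> 0) (at_right (c3 - d1 m c1))"
    using alpha_tendsto_left_end eventually_left_of_c3
    by (rule Lim_transform_eventually[OF _ eventually_mono]) (simp add: alpha_hat_eq_alpha)
  show "(alpha_hat m c1 c3 \<longlongrightarrow> 0) (at_left (c3 + d1 m c1))"
    using alpha_tendsto_right_end eventually_right_of_c3
    by (rule Lim_transform_eventually[OF _ eventually_mono]) (simp add: alpha_hat_eq_alpha)
qed

lemma gauss_map_is_Birkhoff_Gauss_of_curvature_1: assumes p: "p \<in> U \<times> UNIV"
  shows "\<exists>Df. (fhat m c1 c3 has_derivative Df) (at p)
      \<and> is_BG_value m (Df (1, 0)) (Df (0, 1)) (gauss_map p)
      \<and> endo_det_is (Df (1, 0)) (Df (0, 1)) (gauss_map_deriv p (1, 0)) (gauss_map_deriv p (0, 1)) 1"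
proof -
  obtain u v where uv: "p = (u, v)" and u: "u \<in> U" using p by auto
  define a \<rho> where "a = alpha u" and "\<rho> = radius (alpha u)"
  have a: "0 < a" using alpha_in[OF u] unfolding a_def by simp
  have \<rho>: "0 < \<rho>" unfolding \<rho>_def by (rule radius_pos)
  from has_derivative_surface_of_revolution[OF DERIV_alpha_hat[OF u] DERIV_ident, of v]
  have "(fhat m c1 c3 has_derivative
      (\<lambda>h. fst h *\<^sub>R revolution_tangent_u (alpha' u) 1 v + snd h *\<^sub>R revolution_tangent_v a v)) (at p)"
    unfolding fhat_eq a_def alpha_hat_eq_alpha(2)[OF u] uv .
  moreover have "is_BG_value m (revolution_tangent_u (alpha' u) 1 v) (revolution_tangent_v a v) (gauss_map p)"
    unfolding uv gauss_map_def surface_of_revolution_def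
    using is_BG_value_revolution[OF _ a \<rho>] gauss_z_on_S[OF u] gauss_z_odd_power[of u] two_le_m
    by (simp add: \<rho>_def)
  moreover have "endo_det_is (revolution_tangent_u (alpha' u) 1 v) (revolution_tangent_v a v)
      (gauss_map_deriv p (1, 0)) (gauss_map_deriv p (0, 1)) 1"
    unfolding endo_det_is_def gauss_map_deriv_def Blinfun_fst_snd_apply uv
  proof (intro exI conjI)
    show "(- a / \<rho>) * (- \<rho> / a) - 0 * 0 = 1" using a \<rho> by simp
  qed (use a in \<open>simp_all add: a_def \<rho>_def revolution_tangent_u_def revolution_tangent_v_def vec_eq_iff forall_3\<close>)
  ultimately show ?thesis by auto
qed

end

theorem mainTheorem5:
  fixes m :: nat and c1 c3 :: real
  assumes "m \<ge> 2" and "0 < c1" and "c1 < 1"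
  defines "s \<equiv> sqrt (1 - c1)"
      and "D \<equiv> d1 m c1"
      and "L \<equiv> (1 - c1 ^ m) powr ((2 * real m - 1) / (2 * real m))
                 / c1 powr ((2 * real m - 1) / 2)"
  shows
    "(\<forall>\<alpha>\<in>{0..s}. integrandI m c1 integrable_on {\<alpha>..s})
     \<and> D > 0
     \<and> (\<forall>u\<in>{c3 - D<..<c3 + D}. \<exists>!\<alpha>. \<alpha> \<in> {0<..s} \<and> Ifun m c1 \<alpha> = \<bar>u - c3\<bar>)
     \<and> alpha_hat m c1 c3 c3 = s
     \<and> (\<exists>a1 a2 :: real \<Rightarrow> real.
          (\<forall>u\<in>{c3 - D<..<c3 + D}.
              (alpha_hat m c1 c3 has_real_derivative a1 u) (at u)
            \<and> (a1 has_real_derivative a2 u) (at u))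
        \<and> continuous_on {c3 - D<..<c3 + D} a2
        \<and> a1 c3 = 0 \<and> a2 c3 = 0
        \<and> (a1 \<longlongrightarrow> L) (at_right (c3 - D))
        \<and> (a1 \<longlongrightarrow> - L) (at_left (c3 + D)))
     \<and> (\<exists>\<eta> :: real \<times> real \<Rightarrow> real^3. \<exists>D\<eta> :: real \<times> real \<Rightarrow> ((real \<times> real) \<Rightarrow>\<^sub>L (real^3)).
          continuous_on ({c3 - D<..<c3 + D} \<times> UNIV) D\<eta>
        \<and> (\<forall>p\<in>{c3 - D<..<c3 + D} \<times> UNIV.
              (\<eta> has_derivative blinfun_apply (D\<eta> p)) (at p)
            \<and> (\<exists>Df. (fhat m c1 c3 has_derivative Df) (at p)
                 \<and> is_BG_value m (Df (1, 0)) (Df (0, 1)) (\<eta> p)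
                 \<and> endo_det_is (Df (1, 0)) (Df (0, 1))
                     (blinfun_apply (D\<eta> p) (1, 0)) (blinfun_apply (D\<eta> p) (0, 1)) 1)))
     \<and> (alpha_hat m c1 c3 \<longlongrightarrow> 0) (at_right (c3 - D))
     \<and> (alpha_hat m c1 c3 \<longlongrightarrow> 0) (at_left (c3 + D))"
proof -
  interpret rotational_surface m c1 c3 using assms(1-3) by unfold_locales
  have profile: "\<exists>a1 a2 :: real \<Rightarrow> real.
      (\<forall>u\<in>U. (alpha_hat m c1 c3 has_real_derivative a1 u) (at u) \<and> (a1 has_real_derivative a2 u) (at u))
      \<and> continuous_on U a2 \<and> a1 c3 = 0 \<and> a2 c3 = 0
      \<and> (a1 \<longlongrightarrow> L) (at_right (c3 - D)) \<and> (a1 \<longlongrightarrow> - L) (at_left (c3 + D))"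
    unfolding L_def D_def slope_0[symmetric]
    using DERIV_alpha_hat DERIV_alpha' continuous_on_alpha'' alpha'_c3 alpha''_c3
      alpha'_tendsto_left_end alpha'_tendsto_right_end by blast
  have gauss: "\<exists>\<eta> D\<eta>. continuous_on (U \<times> UNIV) D\<eta>
      \<and> (\<forall>p\<in>U \<times> UNIV. (\<eta> has_derivative blinfun_apply (D\<eta> p)) (at p)
        \<and> (\<exists>Df. (fhat m c1 c3 has_derivative Df) (at p) \<and> is_BG_value m (Df (1, 0)) (Df (0, 1)) (\<eta> p)
          \<and> endo_det_is (Df (1, 0)) (Df (0, 1)) (D\<eta> p (1, 0)) (D\<eta> p (0, 1)) 1))"
    using continuous_on_gauss_map_deriv has_derivative_gauss_map gauss_map_is_Birkhoff_Gauss_of_curvature_1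
    by (metis mem_Times_iff prod.collapse)
  show ?thesis
    unfolding s_def D_def
    using integrable_integrand_subinterval d1_pos alpha_hat_eq_alpha alpha_c3 c3_in_U
      profile[unfolded D_def] gauss alpha_hat_tendsto_ends by auto
qed

end
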